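(* Let $\mathcal G$ be an étale groupoid and $X$ a right $\mathcal G$-space with basic action, and $p\colon X\to X/\mathcal G$ the orbit projection. Then $X\times_{p,X/\mathcal G,p}X=\{(x_1,x_2)\in X\times X:p(x_1)=p(x_2)\}$ is closed in $X\times X$ if and only if $X/\mathcal G$ is Hausdorff.
   Context: An étale groupoid: topologies on arrow space $\mathcal G$ and object space $\mathcal G^0\subseteq\mathcal G$ with $r,s$ local homeomorphisms, multiplication and inversion continuous. A right $\mathcal G$-space: space $X$, continuous anchor $s\colon X\to\mathcal G^0$, continuous action $X\times_{s,\mathcal G^0,r}\mathcal G\to X$ with $s(xg)=s(g)$, $(xg_1)g_2=x(g_1g_2)$, $x\,s(x)=x$. $X/\mathcal G$ carries the quotient topology. The action is basic if $(x,g)\mapsto(xg,x)$, $X\times_{s,\mathcal G^0,r}\mathcal G\to X\times X$, is a homeomorphism onto its image with the subspace topology. *)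

theory Defs
  imports "HOL-Analysis.Analysis"
begin

definition local_homeomorphism :: "'a topology \<Rightarrow> 'b topology \<Rightarrow> ('a \<Rightarrow> 'b) \<Rightarrow> bool" where
  "local_homeomorphism T S f \<longleftrightarrow>
     continuous_map T S f \<and>
     (\<forall>x \<in> topspace T. \<exists>U. openin T U \<and> x \<in> U \<and> openin S (f ` U) \<and>
        homeomorphic_map (subtopology T U) (subtopology S (f ` U)) f)"

text \<open>Etale groupoid: arrow space TG (with carrier topspace TG), object space G0
  (a subset of the arrows, with the subspace topology), range r, source s,
  multiplication mul (defined on composable pairs, s g = r h) and inversion gi.\<close>
definition etale_groupoid ::
  "'g topology \<Rightarrow> 'g set \<Rightarrow> ('g \<Rightarrow> 'g) \<Rightarrow> ('g \<Rightarrow> 'g) \<Rightarrow> ('g \<Rightarrow> 'g \<Rightarrow> 'g) \<Rightarrow> ('g \<Rightarrow> 'g) \<Rightarrow> bool" where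
  "etale_groupoid TG G0 r s mul gi \<longleftrightarrow>
     G0 \<subseteq> topspace TG \<and>
     (\<forall>g \<in> topspace TG. r g \<in> G0 \<and> s g \<in> G0) \<and>
     (\<forall>u \<in> G0. r u = u \<and> s u = u) \<and>
     (\<forall>g \<in> topspace TG. \<forall>h \<in> topspace TG. s g = r h \<longrightarrow>
        mul g h \<in> topspace TG \<and> r (mul g h) = r g \<and> s (mul g h) = s h) \<and>
     (\<forall>g \<in> topspace TG. \<forall>h \<in> topspace TG. \<forall>k \<in> topspace TG.
        s g = r h \<longrightarrow> s h = r k \<longrightarrow> mul (mul g h) k = mul g (mul h k)) \<and>
     (\<forall>g \<in> topspace TG. mul (r g) g = g \<and> mul g (s g) = g) \<and>
     (\<forall>g \<in> topspace TG. gi g \<in> topspace TG \<and> r (gi g) = s g \<and> s (gi g) = r g \<and>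
        mul g (gi g) = r g \<and> mul (gi g) g = s g) \<and>
     local_homeomorphism TG (subtopology TG G0) r \<and>
     local_homeomorphism TG (subtopology TG G0) s \<and>
     continuous_map
       (subtopology (prod_topology TG TG) {(g, h). g \<in> topspace TG \<and> h \<in> topspace TG \<and> s g = r h})
       TG (\<lambda>(g, h). mul g h) \<and>
     continuous_map TG TG gi"

definition action_domain ::
  "'x topology \<Rightarrow> ('x \<Rightarrow> 'g) \<Rightarrow> 'g topology \<Rightarrow> ('g \<Rightarrow> 'g) \<Rightarrow> ('x \<times> 'g) set" where
  "action_domain TX sX TG r = {(x, g). x \<in> topspace TX \<and> g \<in> topspace TG \<and> sX x = r g}"

definition right_G_space ::
  "'g topology \<Rightarrow> 'g set \<Rightarrow> ('g \<Rightarrow> 'g) \<Rightarrow> ('g \<Rightarrow> 'g) \<Rightarrow> ('g \<Rightarrow> 'g \<Rightarrow> 'g) \<Rightarrow>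
   'x topology \<Rightarrow> ('x \<Rightarrow> 'g) \<Rightarrow> ('x \<Rightarrow> 'g \<Rightarrow> 'x) \<Rightarrow> bool" where
  "right_G_space TG G0 r s mul TX sX act \<longleftrightarrow>
     continuous_map TX (subtopology TG G0) sX \<and>
     continuous_map (subtopology (prod_topology TX TG) (action_domain TX sX TG r)) TX
       (\<lambda>(x, g). act x g) \<and>
     (\<forall>(x, g) \<in> action_domain TX sX TG r. act x g \<in> topspace TX \<and> sX (act x g) = s g) \<and>
     (\<forall>x \<in> topspace TX. \<forall>g1 \<in> topspace TG. \<forall>g2 \<in> topspace TG.
        sX x = r g1 \<longrightarrow> s g1 = r g2 \<longrightarrow> act (act x g1) g2 = act x (mul g1 g2)) \<and>
     (\<forall>x \<in> topspace TX. act x (sX x) = x)"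

definition basic_action ::
  "'g topology \<Rightarrow> ('g \<Rightarrow> 'g) \<Rightarrow> 'x topology \<Rightarrow> ('x \<Rightarrow> 'g) \<Rightarrow> ('x \<Rightarrow> 'g \<Rightarrow> 'x) \<Rightarrow> bool" where
  "basic_action TG r TX sX act \<longleftrightarrow>
     homeomorphic_map
       (subtopology (prod_topology TX TG) (action_domain TX sX TG r))
       (subtopology (prod_topology TX TX) ((\<lambda>(x, g). (act x g, x)) ` action_domain TX sX TG r))
       (\<lambda>(x, g). (act x g, x))"

text \<open>Orbit projection p : X \<rightarrow> X/G, an orbit being represented as a set.\<close>
definition orbit :: "'g topology \<Rightarrow> ('g \<Rightarrow> 'g) \<Rightarrow> ('x \<Rightarrow> 'g) \<Rightarrow> ('x \<Rightarrow> 'g \<Rightarrow> 'x) \<Rightarrow> 'x \<Rightarrow> 'x set" where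
  "orbit TG r sX act x = {act x g | g. g \<in> topspace TG \<and> r g = sX x}"

definition orbit_space ::
  "'g topology \<Rightarrow> ('g \<Rightarrow> 'g) \<Rightarrow> 'x topology \<Rightarrow> ('x \<Rightarrow> 'g) \<Rightarrow> ('x \<Rightarrow> 'g \<Rightarrow> 'x) \<Rightarrow> 'x set topology" where
  "orbit_space TG r TX sX act = topology (\<lambda>U. U \<subseteq> orbit TG r sX act ` topspace TX \<and>
      openin TX {x \<in> topspace TX. orbit TG r sX act x \<in> U})"

lemma istopology_orbit_space:
  "istopology (\<lambda>U. U \<subseteq> orbit TG r sX act ` topspace TX \<and>
      openin TX {x \<in> topspace TX. orbit TG r sX act x \<in> U})"
proof -
  let ?p = "orbit TG r sX act"
  have 1: "openin TX {x \<in> topspace TX. ?p x \<in> S \<inter> T}"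
    if "openin TX {x \<in> topspace TX. ?p x \<in> S}" "openin TX {x \<in> topspace TX. ?p x \<in> T}" for S T
  proof -
    have "{x \<in> topspace TX. ?p x \<in> S \<inter> T} = {x \<in> topspace TX. ?p x \<in> S} \<inter> {x \<in> topspace TX. ?p x \<in> T}" by auto
    then show ?thesis using that by auto
  qed
  have 2: "openin TX {x \<in> topspace TX. ?p x \<in> \<Union>K}"
    if "\<forall>S\<in>K. openin TX {x \<in> topspace TX. ?p x \<in> S}" for K
  proof -
    have "{x \<in> topspace TX. ?p x \<in> \<Union>K} = (\<Union>S\<in>K. {x \<in> topspace TX. ?p x \<in> S})" by auto
    then show ?thesis using that by auto
  qed
  show ?thesis unfolding istopology_def using 1 2 by blast
qed

end

(*
  The orbit projection p of an etale groupoid action is an open quotient map: if x = u g with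
  u in an open set U, a continuous local section sigma of the range map r through g^-1 gives the
  continuous map y |-> y sigma(s y) near x, which sends x to u; so a neighbourhood of x lies in
  the saturation of U.  For an open quotient map p, the fibre product X x_p X is the preimage of
  the diagonal under p x p, and the image under p of an open box missing it is a pair of disjoint
  open sets; hence it is closed exactly when X/G is Hausdorff.
*)
theory Submission
  imports Defs
begin

lemma closedin_fibre_product_iff_Hausdorff_space:
  assumes q: "quotient_map X Y q" and open_q: "open_map X Y q"
  shows "closedin (prod_topology X X)
           {(x1, x2). x1 \<in> topspace X \<and> x2 \<in> topspace X \<and> q x1 = q x2}
         \<longleftrightarrow> Hausdorff_space Y"
    (is "closedin _ ?R \<longleftrightarrow> _")
proof
  assume "closedin (prod_topology X X) ?R"
  then have R_compl_open: "openin (prod_topology X X) (topspace X \<times> topspace X - ?R)"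
    by (simp add: closedin_def)
  show "Hausdorff_space Y"
    unfolding Hausdorff_space_def
  proof clarify
    fix a b assume "a \<in> topspace Y" "b \<in> topspace Y" "a \<noteq> b"
    then obtain x1 x2 where x: "x1 \<in> topspace X" "x2 \<in> topspace X" "a = q x1" "b = q x2"
      using quotient_imp_surjective_map[OF q] by blast
    with \<open>a \<noteq> b\<close> have "(x1, x2) \<in> topspace X \<times> topspace X - ?R"
      by simp
    then obtain U1 U2 where U: "openin X U1" "openin X U2" "x1 \<in> U1" "x2 \<in> U2"
        "U1 \<times> U2 \<subseteq> topspace X \<times> topspace X - ?R"
      using R_compl_open unfolding openin_prod_topology_alt by meson
    have "disjnt (q ` U1) (q ` U2)"
    proof (clarsimp simp: disjnt_iff)
      fix u1 u2 assume "u1 \<in> U1" "u2 \<in> U2" "q u1 = q u2"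
      then show False
        using U(5) by blast
    qed
    moreover have "openin Y (q ` U1)" "openin Y (q ` U2)"
      using open_q U(1,2) by (simp_all add: open_map_def)
    ultimately show "\<exists>U V. openin Y U \<and> openin Y V \<and> a \<in> U \<and> b \<in> V \<and> disjnt U V"
      using U(3,4) x(3,4) by blast
  qed
next
  assume "Hausdorff_space Y"
  then have "closedin (prod_topology Y Y) ((\<lambda>y. (y, y)) ` topspace Y)"
    by (simp add: Hausdorff_space_closedin_diagonal)
  moreover have "continuous_map (prod_topology X X) (prod_topology Y Y) (\<lambda>(x1, x2). (q x1, q x2))"
    using quotient_imp_continuous_map[OF q] by (simp add: continuous_map_prod_top)
  ultimately have "closedin (prod_topology X X)
      {z \<in> topspace (prod_topology X X). (\<lambda>(x1, x2). (q x1, q x2)) z \<in> (\<lambda>y. (y, y)) ` topspace Y}"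
    by (intro closedin_continuous_map_preimage)
  also have "{z \<in> topspace (prod_topology X X).
      (\<lambda>(x1, x2). (q x1, q x2)) z \<in> (\<lambda>y. (y, y)) ` topspace Y} = ?R"
    using quotient_imp_surjective_map[OF q] by fastforce
  finally show "closedin (prod_topology X X) ?R" .
qed

lemma openin_orbit_space:
  "openin (orbit_space TG r TX sX act) U \<longleftrightarrow> U \<subseteq> orbit TG r sX act ` topspace TX \<and>
      openin TX {x \<in> topspace TX. orbit TG r sX act x \<in> U}"
  unfolding orbit_space_def topology_inverse'[OF istopology_orbit_space] by (rule refl)

lemma topspace_orbit_space:
  "topspace (orbit_space TG r TX sX act) = orbit TG r sX act ` topspace TX"
proof
  show "topspace (orbit_space TG r TX sX act) \<subseteq> orbit TG r sX act ` topspace TX"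
    using openin_topspace[of "orbit_space TG r TX sX act"]
    unfolding openin_orbit_space by (rule conjunct1)
  have "{x \<in> topspace TX. orbit TG r sX act x \<in> orbit TG r sX act ` topspace TX} = topspace TX"
    by blast
  then have "openin (orbit_space TG r TX sX act) (orbit TG r sX act ` topspace TX)"
    unfolding openin_orbit_space by simp
  then show "orbit TG r sX act ` topspace TX \<subseteq> topspace (orbit_space TG r TX sX act)"
    by (rule openin_subset)
qed

lemma quotient_map_orbit:
  "quotient_map TX (orbit_space TG r TX sX act) (orbit TG r sX act)"
  unfolding quotient_map_def topspace_orbit_space openin_orbit_space by simp

lemma local_homeomorphism_local_section:
  assumes f: "local_homeomorphism T S f" and x: "x \<in> topspace T"
  obtains V \<sigma> where "openin S V" "f x \<in> V" "continuous_map (subtopology S V) T \<sigma>"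
    "\<sigma> (f x) = x" "\<And>y. y \<in> V \<Longrightarrow> f (\<sigma> y) = y"
proof -
  obtain U where U: "openin T U" "x \<in> U" "openin S (f ` U)"
      "homeomorphic_map (subtopology T U) (subtopology S (f ` U)) f"
    using f x unfolding local_homeomorphism_def by blast
  then obtain \<sigma> where \<sigma>: "homeomorphic_maps (subtopology T U) (subtopology S (f ` U)) f \<sigma>"
    using homeomorphic_map_maps by blast
  have "U \<subseteq> topspace T" "f ` U \<subseteq> topspace S"
    using U(1,3) openin_subset by blast+
  with \<sigma> U(2,3) show thesis
    by (intro that[of "f ` U" \<sigma>]) (auto simp: homeomorphic_maps_def continuous_map_in_subtopology)
qed

lemma etale_groupoid_units_subset:
  "etale_groupoid TG G0 r s mul gi \<Longrightarrow> G0 \<subseteq> topspace TG"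
  by (simp add: etale_groupoid_def)

lemma etale_groupoid_range_unit:
  "etale_groupoid TG G0 r s mul gi \<Longrightarrow> u \<in> G0 \<Longrightarrow> r u = u"
  by (simp add: etale_groupoid_def)

lemma etale_groupoid_mul:
  "etale_groupoid TG G0 r s mul gi \<Longrightarrow> g \<in> topspace TG \<Longrightarrow> h \<in> topspace TG \<Longrightarrow> s g = r h \<Longrightarrow>
     mul g h \<in> topspace TG \<and> r (mul g h) = r g"
  by (simp add: etale_groupoid_def)

lemma etale_groupoid_inverse:
  "etale_groupoid TG G0 r s mul gi \<Longrightarrow> g \<in> topspace TG \<Longrightarrow>
     gi g \<in> topspace TG \<and> r (gi g) = s g \<and> mul g (gi g) = r g"
  by (simp add: etale_groupoid_def)

lemma etale_groupoid_local_homeomorphism_range: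
  "etale_groupoid TG G0 r s mul gi \<Longrightarrow> local_homeomorphism TG (subtopology TG G0) r"
  by (simp add: etale_groupoid_def)

lemma right_G_space_continuous_anchor:
  "right_G_space TG G0 r s mul TX sX act \<Longrightarrow> continuous_map TX (subtopology TG G0) sX"
  by (simp add: right_G_space_def)

lemma right_G_space_continuous_action:
  "right_G_space TG G0 r s mul TX sX act \<Longrightarrow>
     continuous_map (subtopology (prod_topology TX TG) (action_domain TX sX TG r)) TX (\<lambda>(x, g). act x g)"
  by (simp add: right_G_space_def)

lemma right_G_space_act:
  "right_G_space TG G0 r s mul TX sX act \<Longrightarrow> x \<in> topspace TX \<Longrightarrow> g \<in> topspace TG \<Longrightarrow> sX x = r g \<Longrightarrow>
     act x g \<in> topspace TX \<and> sX (act x g) = s g"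
  by (auto simp: right_G_space_def action_domain_def)

lemma right_G_space_act_act:
  "right_G_space TG G0 r s mul TX sX act \<Longrightarrow> x \<in> topspace TX \<Longrightarrow>
     g \<in> topspace TG \<Longrightarrow> h \<in> topspace TG \<Longrightarrow> sX x = r g \<Longrightarrow> s g = r h \<Longrightarrow>
     act (act x g) h = act x (mul g h)"
  by (simp add: right_G_space_def)

lemma right_G_space_act_anchor:
  "right_G_space TG G0 r s mul TX sX act \<Longrightarrow> x \<in> topspace TX \<Longrightarrow> act x (sX x) = x"
  by (simp add: right_G_space_def)

lemma act_act_inverse:
  assumes G: "etale_groupoid TG G0 r s mul gi" and X: "right_G_space TG G0 r s mul TX sX act"
    and x: "x \<in> topspace TX" and g: "g \<in> topspace TG" "sX x = r g"
  shows "act (act x g) (gi g) = x"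
proof -
  have "act (act x g) (gi g) = act x (mul g (gi g))"
    using right_G_space_act_act[OF X x g(1) _ g(2)] etale_groupoid_inverse[OF G g(1)] by simp
  also have "\<dots> = x"
    using etale_groupoid_inverse[OF G g(1)] right_G_space_act_anchor[OF X x] g(2) by simp
  finally show ?thesis .
qed

lemma mem_orbit_self:
  assumes G: "etale_groupoid TG G0 r s mul gi" and X: "right_G_space TG G0 r s mul TX sX act"
    and x: "x \<in> topspace TX"
  shows "x \<in> orbit TG r sX act x"
proof -
  have "sX x \<in> G0"
    using right_G_space_continuous_anchor[OF X] x by (auto simp: continuous_map_def)
  then have "sX x \<in> topspace TG" "r (sX x) = sX x"
    using etale_groupoid_units_subset[OF G] etale_groupoid_range_unit[OF G] by auto
  with right_G_space_act_anchor[OF X x] show ?thesis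
    unfolding orbit_def by force
qed

lemma orbit_act_subset:
  assumes G: "etale_groupoid TG G0 r s mul gi" and X: "right_G_space TG G0 r s mul TX sX act"
    and x: "x \<in> topspace TX" and h: "h \<in> topspace TG" "sX x = r h"
  shows "orbit TG r sX act (act x h) \<subseteq> orbit TG r sX act x"
proof
  fix z assume "z \<in> orbit TG r sX act (act x h)"
  then obtain g where g: "g \<in> topspace TG" "r g = s h" "z = act (act x h) g"
    using right_G_space_act[OF X x h] unfolding orbit_def by auto
  then have "z = act x (mul h g)" "mul h g \<in> topspace TG" "r (mul h g) = sX x"
    using right_G_space_act_act[OF X x h(1) g(1) h(2)] etale_groupoid_mul[OF G h(1) g(1)] h(2)
    by auto
  then show "z \<in> orbit TG r sX act x"
    unfolding orbit_def by blast
qed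

lemma orbit_act:
  assumes G: "etale_groupoid TG G0 r s mul gi" and X: "right_G_space TG G0 r s mul TX sX act"
    and x: "x \<in> topspace TX" and h: "h \<in> topspace TG" "sX x = r h"
  shows "orbit TG r sX act (act x h) = orbit TG r sX act x"
proof
  show "orbit TG r sX act (act x h) \<subseteq> orbit TG r sX act x"
    by (rule orbit_act_subset[OF G X x h])
  have xh: "act x h \<in> topspace TX" "sX (act x h) = r (gi h)"
    using right_G_space_act[OF X x h] etale_groupoid_inverse[OF G h(1)] by auto
  have "orbit TG r sX act x = orbit TG r sX act (act (act x h) (gi h))"
    using act_act_inverse[OF G X x h] by simp
  also have "\<dots> \<subseteq> orbit TG r sX act (act x h)"
    using orbit_act_subset[OF G X xh(1) _ xh(2)] etale_groupoid_inverse[OF G h(1)] by blast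
  finally show "orbit TG r sX act x \<subseteq> orbit TG r sX act (act x h)" .
qed

lemma continuous_map_act_local_section:
  assumes X: "right_G_space TG G0 r s mul TX sX act"
    and \<sigma>: "continuous_map (subtopology (subtopology TG G0) V) TG \<sigma>"
    and r\<sigma>: "\<And>y. y \<in> V \<Longrightarrow> r (\<sigma> y) = y"
  shows "continuous_map (subtopology TX {x \<in> topspace TX. sX x \<in> V}) TX (\<lambda>x. act x (\<sigma> (sX x)))"
proof -
  let ?A = "{x \<in> topspace TX. sX x \<in> V}"
  have "continuous_map (subtopology TX ?A) (subtopology (subtopology TG G0) V) sX"
    using right_G_space_continuous_anchor[OF X]
    by (auto simp: continuous_map_in_subtopology continuous_map_from_subtopology)
  then have "continuous_map (subtopology TX ?A) TG (\<sigma> \<circ> sX)"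
    using \<sigma> by (rule continuous_map_compose)
  then have "continuous_map (subtopology TX ?A) (prod_topology TX TG) (\<lambda>x. (x, \<sigma> (sX x)))"
    using continuous_map_from_subtopology[OF continuous_map_id, of TX ?A]
    by (simp add: continuous_map_paired o_def id_def)
  moreover have "(x, \<sigma> (sX x)) \<in> action_domain TX sX TG r" if "x \<in> ?A" for x
    using that r\<sigma> \<open>continuous_map (subtopology TX ?A) TG (\<sigma> \<circ> sX)\<close>
    by (auto simp: action_domain_def dest!: continuous_map_image_subset_topspace)
  ultimately have "continuous_map (subtopology TX ?A)
      (subtopology (prod_topology TX TG) (action_domain TX sX TG r)) (\<lambda>x. (x, \<sigma> (sX x)))"
    by (auto simp: continuous_map_in_subtopology)
  from continuous_map_compose[OF this right_G_space_continuous_action[OF X]]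
  show ?thesis
    by (simp add: o_def)
qed

lemma orbit_act_local_section:
  assumes G: "etale_groupoid TG G0 r s mul gi" and X: "right_G_space TG G0 r s mul TX sX act"
    and \<sigma>: "continuous_map (subtopology (subtopology TG G0) V) TG \<sigma>"
    and r\<sigma>: "\<And>y. y \<in> V \<Longrightarrow> r (\<sigma> y) = y"
    and x: "x \<in> topspace TX" "sX x \<in> V"
  shows "orbit TG r sX act (act x (\<sigma> (sX x))) = orbit TG r sX act x"
proof (rule orbit_act[OF G X x(1)])
  have "sX x \<in> topspace (subtopology (subtopology TG G0) V)"
    using right_G_space_continuous_anchor[OF X] x by (auto simp: continuous_map_def)
  then show "\<sigma> (sX x) \<in> topspace TG"
    using \<sigma> by (auto simp: continuous_map_def)
  show "sX x = r (\<sigma> (sX x))"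
    using r\<sigma>[OF x(2)] by simp
qed

lemma openin_orbit_saturation:
  assumes G: "etale_groupoid TG G0 r s mul gi" and X: "right_G_space TG G0 r s mul TX sX act"
    and U: "openin TX U"
  shows "openin TX {x \<in> topspace TX. orbit TG r sX act x \<in> orbit TG r sX act ` U}"
proof (subst openin_subopen, intro ballI)
  let ?p = "orbit TG r sX act"
  fix x assume "x \<in> {x \<in> topspace TX. ?p x \<in> ?p ` U}"
  then obtain u where x: "x \<in> topspace TX" and u: "u \<in> U" "?p x = ?p u"
    by blast
  have uX: "u \<in> topspace TX"
    using U u(1) openin_subset by blast
  have "x \<in> ?p u"
    using mem_orbit_self[OF G X x] u(2) by simp
  then obtain g where g: "g \<in> topspace TG" "sX u = r g" "x = act u g"
    unfolding orbit_def by auto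
  note g_inv = etale_groupoid_inverse[OF G g(1)]
  have sXx: "sX x = r (gi g)"
    using right_G_space_act[OF X uX g(1,2)] g(3) g_inv by simp
  obtain V \<sigma> where V: "openin (subtopology TG G0) V" "r (gi g) \<in> V"
    and \<sigma>: "continuous_map (subtopology (subtopology TG G0) V) TG \<sigma>" "\<sigma> (r (gi g)) = gi g"
      "\<And>y. y \<in> V \<Longrightarrow> r (\<sigma> y) = y"
    using local_homeomorphism_local_section[OF etale_groupoid_local_homeomorphism_range[OF G]]
      g_inv by metis
  define A where "A = {y \<in> topspace TX. sX y \<in> V}"
  define W where "W = {y \<in> topspace (subtopology TX A). act y (\<sigma> (sX y)) \<in> U}"
  have "openin TX A"
    unfolding A_def by (rule openin_continuous_map_preimage[OF right_G_space_continuous_anchor[OF X] V(1)])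
  moreover have "openin (subtopology TX A) W"
    unfolding W_def A_def
    by (rule openin_continuous_map_preimage[OF continuous_map_act_local_section[OF X \<sigma>(1,3)] U])
  ultimately have "openin TX W"
    using openin_trans_full by blast
  moreover have "x \<in> W"
    using act_act_inverse[OF G X uX g(1,2)] x sXx V(2) \<sigma>(2) g(3) u(1) by (simp add: W_def A_def)
  moreover have "W \<subseteq> {x \<in> topspace TX. ?p x \<in> ?p ` U}"
  proof
    fix y assume "y \<in> W"
    then have y: "y \<in> topspace TX" "sX y \<in> V" "act y (\<sigma> (sX y)) \<in> U"
      by (auto simp: W_def A_def)
    then have "?p y = ?p (act y (\<sigma> (sX y)))"
      using orbit_act_local_section[OF G X \<sigma>(1) \<sigma>(3) y(1,2)] by simp
    with y show "y \<in> {x \<in> topspace TX. ?p x \<in> ?p ` U}"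
      by blast
  qed
  ultimately show "\<exists>T. openin TX T \<and> x \<in> T \<and> T \<subseteq> {x \<in> topspace TX. ?p x \<in> ?p ` U}"
    by blast
qed

lemma open_map_orbit:
  assumes "etale_groupoid TG G0 r s mul gi" and "right_G_space TG G0 r s mul TX sX act"
  shows "open_map TX (orbit_space TG r TX sX act) (orbit TG r sX act)"
  unfolding open_map_def openin_orbit_space
  using openin_orbit_saturation[OF assms] openin_subset by blast

theorem lemma2p13:
  fixes TG :: "'g topology" and G0 :: "'g set" and r s :: "'g \<Rightarrow> 'g"
    and mul :: "'g \<Rightarrow> 'g \<Rightarrow> 'g" and gi :: "'g \<Rightarrow> 'g"
    and TX :: "'x topology" and sX :: "'x \<Rightarrow> 'g" and act :: "'x \<Rightarrow> 'g \<Rightarrow> 'x"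
  assumes "etale_groupoid TG G0 r s mul gi"
    and "right_G_space TG G0 r s mul TX sX act"
    and "basic_action TG r TX sX act"
  shows "closedin (prod_topology TX TX)
           {(x1, x2). x1 \<in> topspace TX \<and> x2 \<in> topspace TX \<and>
              orbit TG r sX act x1 = orbit TG r sX act x2}
         \<longleftrightarrow> Hausdorff_space (orbit_space TG r TX sX act)"
  using closedin_fibre_product_iff_Hausdorff_space[OF quotient_map_orbit open_map_orbit[OF assms(1,2)]] .

end
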